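(* Let $n\ge 3$ and let $h(q)=q^n+q^{n-2}a_{n-2}+\dots+qa_1+a_0$ with $a_0,\dots,a_{n-2}\in\mathbb{H}$ and $a_{n-2}\neq 0$. Put $\lambda=\big(\max_{0\le j\le n-2}|a_j|\big)^{1/n}$. Then every zero $q\in\mathbb{H}$ of $h$ satisfies $$|q|\le \lambda+\max\{\lambda^2,\lambda^{n-1}\}.$$
   Context: $\mathbb{H}$ denotes the real quaternions with the Euclidean norm $|q|=\sqrt{q\bar q}$. The polynomial $h$ has coefficients written to the right of the powers and is evaluated at $q\in\mathbb{H}$ by direct substitution; a zero of $h$ is a $q\in\mathbb{H}$ with $h(q)=0$. *)

theory Defs
  imports "HOL-Analysis.Analysis"
begin

datatype quat = Quat (Re: real) (Im1: real) (Im2: real) (Im3: real)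

lemma quat_eqI: "Re x = Re y \<Longrightarrow> Im1 x = Im1 y \<Longrightarrow> Im2 x = Im2 y \<Longrightarrow> Im3 x = Im3 y \<Longrightarrow> x = y"
  by (cases x; cases y) simp

instantiation quat :: ring_1
begin
definition "0 = Quat 0 0 0 0"
definition "1 = Quat 1 0 0 0"
definition "x + y = Quat (Re x + Re y) (Im1 x + Im1 y) (Im2 x + Im2 y) (Im3 x + Im3 y)"
definition "x - y = Quat (Re x - Re y) (Im1 x - Im1 y) (Im2 x - Im2 y) (Im3 x - Im3 y)"
definition "- x = Quat (- Re x) (- Im1 x) (- Im2 x) (- Im3 x)"
definition "x * y = Quat
   (Re x * Re y - Im1 x * Im1 y - Im2 x * Im2 y - Im3 x * Im3 y)
   (Re x * Im1 y + Im1 x * Re y + Im2 x * Im3 y - Im3 x * Im2 y)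
   (Re x * Im2 y - Im1 x * Im3 y + Im2 x * Re y + Im3 x * Im1 y)
   (Re x * Im3 y + Im1 x * Im2 y - Im2 x * Im1 y + Im3 x * Re y)"
instance
  by standard (auto intro!: quat_eqI simp: zero_quat_def one_quat_def plus_quat_def
      minus_quat_def uminus_quat_def times_quat_def algebra_simps)
end

definition qnorm :: "quat \<Rightarrow> real" where
  "qnorm q = sqrt ((Re q)\<^sup>2 + (Im1 q)\<^sup>2 + (Im2 q)\<^sup>2 + (Im3 q)\<^sup>2)"

end

theory Submission
  imports Defs
begin

text \<open>Since the quaternion norm is multiplicative and subadditive, a zero \<open>q\<close> satisfies
  \<open>|q|\<^sup>n \<le> M (1 + |q| + \<dots> + |q|\<^sup>n\<^sup>-\<^sup>2)\<close> with \<open>M = \<lambda>\<^sup>n\<close>. Writing \<open>|q| = \<lambda> t\<close> this becomes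
  \<open>t\<^sup>n \<le> \<Sum>\<^sub>j \<lambda>\<^sup>j t\<^sup>j\<close>; every coefficient \<open>\<lambda>\<^sup>j\<close> with \<open>1 \<le> j \<le> n - 2\<close> is at most
  \<open>c = max \<lambda> \<lambda>\<^sup>n\<^sup>-\<^sup>2\<close>, and if \<open>t > 1 + c\<close> the geometric sum \<open>1 + (t - 1)(t + \<dots> + t\<^sup>n\<^sup>-\<^sup>2)\<close>
  is smaller than \<open>t\<^sup>n\<close>. Hence \<open>t \<le> 1 + c\<close>, i.e. \<open>|q| \<le> \<lambda> + \<lambda> c\<close>.\<close>

lemma qnorm_nonneg: "qnorm x \<ge> 0"
  by (simp add: qnorm_def)

lemma qnorm_eq_0_iff: "qnorm x = 0 \<longleftrightarrow> x = 0"
  by (cases x) (simp add: qnorm_def zero_quat_def add_nonneg_eq_0_iff)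

lemma qnorm_zero: "qnorm 0 = 0"
  by (simp add: qnorm_def zero_quat_def)

lemma qnorm_one: "qnorm 1 = 1"
  by (simp add: qnorm_def one_quat_def)

lemma qnorm_minus: "qnorm (- x) = qnorm x"
  by (simp add: qnorm_def uminus_quat_def)

lemma qnorm_mult: "qnorm (x * y) = qnorm x * qnorm y"
  unfolding qnorm_def real_sqrt_mult[symmetric]
  by (rule arg_cong[where f = sqrt]) (simp add: times_quat_def power2_eq_square algebra_simps)

lemma qnorm_power: "qnorm (x ^ j) = qnorm x ^ j"
  by (induction j) (simp_all add: qnorm_one qnorm_mult)

text \<open>The triangle inequality is inherited from the norm of \<open>\<complex> \<times> \<complex>\<close>, into which
  \<open>quat\<close> embeds additively and isometrically.\<close>

definition quat_to_pair :: "quat \<Rightarrow> complex \<times> complex" where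
  "quat_to_pair x = (Complex (Re x) (Im1 x), Complex (Im2 x) (Im3 x))"

lemma qnorm_eq_norm_quat_to_pair: "qnorm x = norm (quat_to_pair x)"
  by (simp add: quat_to_pair_def qnorm_def norm_Pair complex_norm add.assoc)

lemma quat_to_pair_add: "quat_to_pair (x + y) = quat_to_pair x + quat_to_pair y"
  by (simp add: quat_to_pair_def plus_quat_def complex_eq_iff)

lemma qnorm_triangle: "qnorm (x + y) \<le> qnorm x + qnorm y"
  unfolding qnorm_eq_norm_quat_to_pair quat_to_pair_add by (rule norm_triangle_ineq)

lemma qnorm_sum_le: "qnorm (sum f S) \<le> (\<Sum>j\<in>S. qnorm (f j))"
proof (induction S rule: infinite_finite_induct)
  case (insert x F)
  then show ?case using qnorm_triangle[of "f x" "sum f F"] by simp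
qed (simp_all add: qnorm_zero)

lemma qnorm_root_power_le:
  fixes a :: "nat \<Rightarrow> quat"
  assumes root: "q ^ (k + 2) + (\<Sum>j\<le>k. q ^ j * a j) = 0"
    and bound: "\<And>j. j \<le> k \<Longrightarrow> qnorm (a j) \<le> M"
  shows "qnorm q ^ (k + 2) \<le> M * (\<Sum>j\<le>k. qnorm q ^ j)"
proof -
  have "q ^ (k + 2) = - (\<Sum>j\<le>k. q ^ j * a j)"
    using root by (simp add: eq_neg_iff_add_eq_0)
  then have "qnorm q ^ (k + 2) = qnorm (\<Sum>j\<le>k. q ^ j * a j)"
    by (metis qnorm_power qnorm_minus)
  also have "\<dots> \<le> (\<Sum>j\<le>k. qnorm q ^ j * qnorm (a j))"
    by (rule order_trans[OF qnorm_sum_le]) (simp add: qnorm_mult qnorm_power)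
  also have "\<dots> \<le> (\<Sum>j\<le>k. qnorm q ^ j * M)"
    using bound by (intro sum_mono mult_left_mono) (auto simp: qnorm_nonneg)
  finally show ?thesis
    by (simp add: sum_distrib_left mult.commute)
qed

lemma weighted_power_sum_less_power:
  fixes t :: real
  assumes "t > 1" and "b 0 \<le> 1"
    and small: "\<And>j. 1 \<le> j \<Longrightarrow> j \<le> k \<Longrightarrow> b j \<le> t - 1"
  shows "(\<Sum>j\<le>k. b j * t ^ j) < t ^ (k + 2)"
proof -
  have "(\<Sum>j\<le>k. b j * t ^ j) = b 0 + (\<Sum>j<k. b (Suc j) * t ^ Suc j)"
    by (cases k) (simp_all only: sum.atMost_Suc_shift lessThan_Suc_atMost, simp_all)
  also have "\<dots> \<le> 1 + (\<Sum>j<k. (t - 1) * t ^ Suc j)"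
    using assms by (intro add_mono sum_mono mult_right_mono) auto
  also have "(\<Sum>j<k. (t - 1) * t ^ Suc j) = t * ((t - 1) * (\<Sum>j<k. t ^ j))"
    by (simp add: sum_distrib_left algebra_simps)
  also have "\<dots> = t * (t ^ k - 1)"
    by (simp only: power_diff_1_eq)
  also have "\<dots> = t ^ (k + 1) - t"
    by (simp add: algebra_simps)
  also have "1 + (t ^ (k + 1) - t) < t ^ (k + 2)"
  proof -
    have "0 < (t - 1) * (t ^ (k + 1) + 1)"
      using \<open>t > 1\<close> by (simp add: add_pos_pos)
    then show ?thesis by (simp add: algebra_simps)
  qed
  finally show ?thesis .
qed

lemma power_le_max_extremes:
  fixes L :: real
  assumes "L \<ge> 0" and "1 \<le> j" and "j \<le> k"
  shows "L ^ j \<le> max L (L ^ k)"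
proof (cases "L \<le> 1")
  case True
  then have "L ^ j \<le> L ^ 1"
    using assms by (intro power_decreasing) auto
  then show ?thesis by simp
next
  case False
  then have "L ^ j \<le> L ^ k"
    using assms by (intro power_increasing) auto
  then show ?thesis by simp
qed

lemma real_root_bound:
  fixes M r :: real
  assumes "M > 0" and "r \<ge> 0"
    and ineq: "r ^ (k + 2) \<le> M * (\<Sum>j\<le>k. r ^ j)"
  shows "r \<le> M powr (1 / real (k + 2))
           + max ((M powr (1 / real (k + 2)))\<^sup>2) ((M powr (1 / real (k + 2))) ^ (k + 1))"
proof (rule ccontr)
  define L where "L = M powr (1 / real (k + 2))"
  define c where "c = max L (L ^ k)"
  have "L > 0"
    using \<open>M > 0\<close> by (simp add: L_def)
  have L_power: "L ^ (k + 2) = M"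
  proof -
    have "L ^ (k + 2) = L powr real (k + 2)"
      using \<open>L > 0\<close> by (simp only: powr_realpow)
    also have "\<dots> = M"
      using \<open>M > 0\<close> by (simp add: L_def powr_powr)
    finally show ?thesis .
  qed
  have max_eq: "max (L\<^sup>2) (L ^ (k + 1)) = L * c"
    using \<open>L > 0\<close> by (simp add: c_def power2_eq_square max_def mult_le_cancel_left_pos)
  define t where "t = r / L"
  have r_eq: "r = L * t"
    using \<open>L > 0\<close> by (simp add: t_def)
  assume "\<not> ?thesis"
  then have "L * (1 + c) < L * t"
    unfolding L_def[symmetric] max_eq r_eq by (simp add: distrib_left)
  then have "t > 1 + c"
    using \<open>L > 0\<close> by simp
  moreover have "c \<ge> 0"
    using \<open>L > 0\<close> by (simp add: c_def)
  ultimately have "(\<Sum>j\<le>k. L ^ j * t ^ j) < t ^ (k + 2)"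
    using \<open>L > 0\<close> power_le_max_extremes[of L]
    by (intro weighted_power_sum_less_power) (fastforce simp: c_def)+
  moreover have "L ^ (k + 2) * t ^ (k + 2) \<le> L ^ (k + 2) * (\<Sum>j\<le>k. L ^ j * t ^ j)"
    using ineq by (simp only: r_eq power_mult_distrib L_power)
  ultimately show False
    using \<open>L > 0\<close> by simp
qed

theorem corollary3:
  fixes n :: nat and a :: "nat \<Rightarrow> quat" and q :: quat
  assumes "n \<ge> 3"
    and "a (n - 2) \<noteq> 0"
    and "q ^ n + (\<Sum>j\<le>n - 2. q ^ j * a j) = 0"
  shows "qnorm q \<le> (MAX j\<in>{0..n - 2}. qnorm (a j)) powr (1 / real n)
           + max (((MAX j\<in>{0..n - 2}. qnorm (a j)) powr (1 / real n))\<^sup>2)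
                 (((MAX j\<in>{0..n - 2}. qnorm (a j)) powr (1 / real n)) ^ (n - 1))"
proof -
  obtain k where n: "n = k + 2"
    using assms(1) le_Suc_ex[of 2 n] by (auto simp: add.commute)
  have n_minus: "k + 2 - 2 = k" "k + 2 - 1 = k + 1"
    by simp_all
  define M where "M = (MAX j\<in>{0..k}. qnorm (a j))"
  have bound: "qnorm (a j) \<le> M" if "j \<le> k" for j
    unfolding M_def using that by (intro Max_ge) auto
  have "M > 0"
    using bound[of k] assms(2) qnorm_nonneg[of "a k"] qnorm_eq_0_iff[of "a k"]
    by (simp add: n)
  moreover have "qnorm q ^ (k + 2) \<le> M * (\<Sum>j\<le>k. qnorm q ^ j)"
    using assms(3) bound unfolding n n_minus by (rule qnorm_root_power_le)
  ultimately have "qnorm q \<le> M powr (1 / real (k + 2))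
      + max ((M powr (1 / real (k + 2)))\<^sup>2) ((M powr (1 / real (k + 2))) ^ (k + 1))"
    by (rule real_root_bound[OF _ qnorm_nonneg])
  then show ?thesis
    unfolding n n_minus M_def .
qed

end
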